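(* Let $0<\delta<1/100$, $\beta\in\mathbb R$, $1<q<\infty$, and let $f\in\mathbb M^2\cap\mathbb W_q^{\beta,\beta}$ be such that its restrictions to $[-1,-1+100\delta^2]$ and to $[1-100\delta^2,1]$ are linear polynomials. Then \[ \Omega_\varphi^2(f,\delta)_{\varphi^{2\beta},q}\le c\,\delta^{1/q-1}\,\Omega_\varphi^2(f,\delta)_{\varphi^{2\beta-1+1/q},1}, \] with $c$ independent of $f$ and $\delta$.
   Context: For $x\in[-1,1]$, $\varphi(x)=\sqrt{1-x^2}$ and $w_{\beta,\beta}=\varphi^{2\beta}$; $\mathbb W_q^{\beta,\beta}=\{f:\|\varphi^{2\beta}f\|_{L_q[-1,1]}<\infty\}$. $\Delta_h^2(f,x)=f(x-h)-2f(x)+f(x+h)$ if $x\pm h\in[-1,1]$, else $0$. For a weight $w$, $\Omega_\varphi^2(f,\delta)_{w,q}=\sup_{0<h\le\delta}\|w(x)\Delta^2_{h\varphi(x)}(f,x)\|_{L_q[-1+8h^2,1-8h^2]}$. $\mathbb M^2$ is the set of convex functions on $(-1,1)$. *)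

theory Defs
  imports "HOL-Analysis.Analysis"
begin

definition phi :: "real \<Rightarrow> real" where
  "phi x = sqrt (1 - x\<^sup>2)"

definition Delta2 :: "real \<Rightarrow> (real \<Rightarrow> real) \<Rightarrow> real \<Rightarrow> real" where
  "Delta2 h f x = (if x - h \<in> {-1..1} \<and> x + h \<in> {-1..1}
                    then f (x - h) - 2 * f x + f (x + h) else 0)"

definition Lq_norm :: "real \<Rightarrow> real set \<Rightarrow> (real \<Rightarrow> real) \<Rightarrow> ennreal" where
  "Lq_norm q S g =
     (let I = (\<integral>\<^sup>+ x \<in> S. ennreal (\<bar>g x\<bar> powr q) \<partial>lborel)
      in if I = \<infinity> then \<infinity> else ennreal ((enn2real I) powr (1 / q)))"

definition Omega2 :: "(real \<Rightarrow> real) \<Rightarrow> real \<Rightarrow> (real \<Rightarrow> real) \<Rightarrow> real \<Rightarrow> ennreal" where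
  "Omega2 f \<delta> w q =
     (SUP h \<in> {0<..\<delta>}. Lq_norm q {-1 + 8 * h\<^sup>2 .. 1 - 8 * h\<^sup>2}
                         (\<lambda>x. w x * Delta2 (h * phi x) f x))"

definition W_space :: "real \<Rightarrow> real \<Rightarrow> (real \<Rightarrow> real) set" where
  "W_space q \<beta> = {f. Lq_norm q {-1..1} (\<lambda>x. phi x powr (2 * \<beta>) * f x) < \<infinity>}"

end

theory Submission
  imports Defs
begin

text \<open>Write D(x) for the second difference of f at x with step \<delta>\<phi>(x), and a = 2\<beta> - 1 + 1/q.
  Since f is affine near \<plusminus>1, every difference with step h\<phi>(x), h \<le> \<delta>, vanishes when x lies
  within 50\<delta>^2 of an end point; at the other points convexity bounds it by D(x). The heart of the
  proof is the pointwise bound \<delta>\<phi>(x) \<phi>(x)^a D(x) \<le> C ||\<phi>^a D||_1: by convexity D(x) is dominated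
  by D at three points within (5/4)\<delta>\<phi>(x) of x, where \<phi> is comparable to \<phi>(x), and these points
  move affinely with a parameter t, so averaging over t \<in> [0, \<delta>\<phi>(x)/2] turns the bound into an
  L_1 norm. Then (\<phi>^{2\<beta>} D)^q = \<phi>^a D (\<phi>^{a+1} D)^{q-1} \<le> \<phi>^a D (C ||\<phi>^a D||_1 / \<delta>)^{q-1}, and
  integrating gives the claim.\<close>

definition second_diff :: "(real \<Rightarrow> real) \<Rightarrow> real \<Rightarrow> real \<Rightarrow> real" where
  "second_diff f x r = f (x - r) - 2 * f x + f (x + r)"

lemma Delta2_eq_second_diff:
  assumes "-1 \<le> x - h" "x + h \<le> 1" "0 \<le> h"
  shows "Delta2 h f x = second_diff f x h"
  using assms by (simp add: Delta2_def second_diff_def)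

lemma second_diff_double:
  "second_diff f y (2 * \<sigma>) = second_diff f (y - \<sigma>) \<sigma> + 2 * second_diff f y \<sigma> + second_diff f (y + \<sigma>) \<sigma>"
proof -
  have "y - \<sigma> - \<sigma> = y - 2 * \<sigma>" "y + \<sigma> + \<sigma> = y + 2 * \<sigma>" "y - \<sigma> + \<sigma> = y" "y + \<sigma> - \<sigma> = y"
    by simp_all
  then show ?thesis
    unfolding second_diff_def by (simp add: algebra_simps)
qed

lemma convex_on_three_point:
  fixes f :: "real \<Rightarrow> real"
  assumes f: "convex_on S f" and S: "a \<in> S" "c \<in> S" and abc: "a \<le> b" "b \<le> c"
  shows "(c - a) * f b \<le> (c - b) * f a + (b - a) * f c"
proof (cases "a = c")
  case False
  define \<mu> where "\<mu> = (b - a) / (c - a)"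
  have ac: "a < c" using False abc by simp
  have \<mu>: "0 \<le> \<mu>" "\<mu> \<le> 1" "(c - a) * \<mu> = b - a" "(c - a) * (1 - \<mu>) = c - b"
    using abc ac by (auto simp: \<mu>_def field_simps)
  have "(1 - \<mu>) *\<^sub>R a + \<mu> *\<^sub>R c = b"
    using \<mu>(3) by (simp add: algebra_simps)
  then have "f b \<le> (1 - \<mu>) * f a + \<mu> * f c"
    using convex_onD[OF f \<mu>(1,2) S] by simp
  then have "(c - a) * f b \<le> (c - a) * ((1 - \<mu>) * f a + \<mu> * f c)"
    using ac by (intro mult_left_mono) auto
  also have "\<dots> = ((c - a) * (1 - \<mu>)) * f a + ((c - a) * \<mu>) * f c"
    by (simp add: algebra_simps)
  also have "\<dots> = (c - b) * f a + (b - a) * f c"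
    by (simp only: \<mu>(3,4))
  finally show ?thesis .
qed (use abc in simp)

lemma convex_on_mem_between:
  fixes S :: "real set"
  assumes "convex_on S f" "a \<in> S" "c \<in> S" "a \<le> b" "b \<le> c"
  shows "b \<in> S"
  using assms convex_on_imp_convex is_interval_convex_1 mem_is_interval_1_I by metis

lemma second_diff_nonneg:
  fixes f :: "real \<Rightarrow> real"
  assumes f: "convex_on S f" and S: "x - r \<in> S" "x + r \<in> S" and r: "0 \<le> r"
  shows "0 \<le> second_diff f x r"
proof -
  have "2 * r * f x \<le> r * f (x - r) + r * f (x + r)"
    using convex_on_three_point[OF f S, of x] r by simp
  then have "r * (2 * f x) \<le> r * (f (x - r) + f (x + r))"
    by (simp add: algebra_simps)
  with r show ?thesis
    by (cases "r = 0") (auto simp: second_diff_def mult_le_cancel_left)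
qed

lemma second_diff_mono:
  fixes f :: "real \<Rightarrow> real"
  assumes f: "convex_on S f" and S: "x - r' \<in> S" "x + r' \<in> S" and r: "0 \<le> r" "r \<le> r'"
  shows "second_diff f x r \<le> second_diff f x r'"
proof -
  have "2 * r' * f (x + r) \<le> (r' - r) * f (x - r') + (r + r') * f (x + r')"
    using convex_on_three_point[OF f S, of "x + r"] r by simp
  moreover have "2 * r' * f (x - r) \<le> (r' + r) * f (x - r') + (r' - r) * f (x + r')"
    using convex_on_three_point[OF f S, of "x - r"] r by simp
  ultimately have "r' * (f (x - r) + f (x + r)) \<le> r' * (f (x - r') + f (x + r'))"
    by (simp add: algebra_simps)
  with r show ?thesis
    by (cases "r' = 0") (auto simp: second_diff_def mult_le_cancel_left)
qed

text \<open>Both differences share the left end point x - s.\<close>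
lemma second_diff_le_shifted:
  fixes f :: "real \<Rightarrow> real"
  assumes f: "convex_on S f" and S: "x - s \<in> S" "x + s + 2 * t \<in> S" and t: "0 \<le> t" "t < s"
  shows "second_diff f x s \<le> second_diff f (x + t) (s + t)"
proof -
  have x: "x \<in> S" and xs: "x + s \<in> S"
    using convex_on_mem_between[OF f S, of x] convex_on_mem_between[OF f S, of "x + s"] t by auto
  have "s * f (x + t) \<le> (s - t) * f x + t * f (x + s)"
    using convex_on_three_point[OF f x xs, of "x + t"] t by simp
  moreover have "(s + t) * f (x + s) \<le> (s - t) * f (x + s + 2 * t) + 2 * t * f (x + t)"
    using convex_on_three_point[OF f _ S(2), of "x + t" "x + s"] t
      convex_on_mem_between[OF f x xs, of "x + t"] by (simp add: algebra_simps)
  ultimately have "(s - t) * (f (x + s) - 2 * f x) \<le> (s - t) * (f (x + s + 2 * t) - 2 * f (x + t))"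
    by (simp add: algebra_simps)
  with t have "f (x + s) - 2 * f x \<le> f (x + s + 2 * t) - 2 * f (x + t)"
    by (simp add: mult_le_cancel_left)
  then show ?thesis by (simp add: second_diff_def algebra_simps)
qed

lemma phi_pos: "\<bar>x\<bar> < 1 \<Longrightarrow> 0 < phi x"
  by (simp add: phi_def abs_square_less_1)

lemma phi_nonneg: "\<bar>x\<bar> \<le> 1 \<Longrightarrow> 0 \<le> phi x"
  by (simp add: phi_def abs_square_le_1)

lemma phi_square: "x\<^sup>2 \<le> 1 \<Longrightarrow> (phi x)\<^sup>2 = 1 - x\<^sup>2"
  by (simp add: phi_def)

lemma one_minus_square_eq_abs: "1 - x\<^sup>2 = (1 - \<bar>x\<bar>) * (1 + \<bar>x::real\<bar>)"
  by (cases "0 \<le> x") (simp_all add: power2_eq_square algebra_simps)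

lemma phi_middle_bounds:
  assumes \<delta>: "0 < \<delta>" and x: "x \<in> {-1 + 50 * \<delta>\<^sup>2 .. 1 - 50 * \<delta>\<^sup>2}"
  shows "0 < phi x" "\<delta> * phi x \<le> (1 - \<bar>x\<bar>) / 5" "\<delta> * phi x \<le> (1 - x\<^sup>2) / 7"
proof -
  define T where "T = 1 - \<bar>x\<bar>"
  have "0 < \<delta>\<^sup>2" "\<bar>x\<bar> \<le> 1 - 50 * \<delta>\<^sup>2"
    using \<delta> x by (simp_all add: abs_le_iff)
  then have T: "50 * \<delta>\<^sup>2 \<le> T" "0 < T" "1 + \<bar>x\<bar> \<le> 2"
    unfolding T_def by linarith+
  have "1 - x\<^sup>2 = T * (1 + \<bar>x\<bar>)"
    unfolding T_def by (rule one_minus_square_eq_abs)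
  moreover have "T * 1 \<le> T * (1 + \<bar>x\<bar>)" "T * (1 + \<bar>x\<bar>) \<le> T * 2"
    using T by (intro mult_left_mono; simp)+
  ultimately have A: "T \<le> 1 - x\<^sup>2" "1 - x\<^sup>2 \<le> 2 * T"
    by linarith+
  show "0 < phi x"
    using T(2) phi_pos by (simp add: T_def)
  have sq: "(\<delta> * phi x)\<^sup>2 = \<delta>\<^sup>2 * (1 - x\<^sup>2)"
    using A T by (simp add: phi_def power_mult_distrib)
  have "\<delta>\<^sup>2 * (1 - x\<^sup>2) \<le> (T / 50) * (2 * T)"
    by (rule mult_mono) (use T A in linarith)+
  then have "(\<delta> * phi x)\<^sup>2 \<le> (T / 5)\<^sup>2"
    unfolding sq by (simp add: power2_eq_square)
  then show "\<delta> * phi x \<le> (1 - \<bar>x\<bar>) / 5"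
    using power2_le_imp_le[of "\<delta> * phi x" "T / 5"] T by (simp add: T_def)
  have "49 * \<delta>\<^sup>2 \<le> 1 - x\<^sup>2"
    using T A by linarith
  then have "\<delta>\<^sup>2 * (1 - x\<^sup>2) \<le> ((1 - x\<^sup>2) / 49) * (1 - x\<^sup>2)"
    using A T by (intro mult_right_mono) auto
  then have "(\<delta> * phi x)\<^sup>2 \<le> ((1 - x\<^sup>2) / 7)\<^sup>2"
    unfolding sq by (simp add: power2_eq_square)
  then show "\<delta> * phi x \<le> (1 - x\<^sup>2) / 7"
    using power2_le_imp_le[of "\<delta> * phi x" "(1 - x\<^sup>2) / 7"] T A by simp
qed

lemma phi_comparable_near:
  assumes \<delta>: "0 < \<delta>" and x: "x \<in> {-1 + 50 * \<delta>\<^sup>2 .. 1 - 50 * \<delta>\<^sup>2}"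
    and z: "\<bar>z - x\<bar> \<le> 5/4 * (\<delta> * phi x)"
  shows "3/4 * phi x \<le> phi z" "phi z \<le> 2 * phi x" "z \<in> {-1 + 8 * \<delta>\<^sup>2 .. 1 - 8 * \<delta>\<^sup>2}"
proof -
  note bounds = phi_middle_bounds[OF \<delta> x]
  have zx: "\<bar>z - x\<bar> \<le> (1 - \<bar>x\<bar>) / 4" "\<bar>z - x\<bar> \<le> 5/28 * (1 - x\<^sup>2)"
    using z bounds by linarith+
  then show "z \<in> {-1 + 8 * \<delta>\<^sup>2 .. 1 - 8 * \<delta>\<^sup>2}"
    using x by (auto simp: abs_le_iff abs_if split: if_split_asm)
  have "\<bar>x + z\<bar> \<le> 2"
    using zx by (auto simp: abs_le_iff abs_if split: if_split_asm)
  moreover have "(1 - z\<^sup>2) - (1 - x\<^sup>2) = (x - z) * (x + z)"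
    by (simp add: power2_eq_square algebra_simps)
  ultimately have "\<bar>(1 - z\<^sup>2) - (1 - x\<^sup>2)\<bar> \<le> \<bar>z - x\<bar> * 2"
    by (simp add: abs_mult abs_minus_commute mult_left_mono)
  then have z2: "9/16 * (1 - x\<^sup>2) \<le> 1 - z\<^sup>2" "1 - z\<^sup>2 \<le> 4 * (1 - x\<^sup>2)"
    using zx bounds(1,3) by (simp_all add: abs_le_iff)
  have "x\<^sup>2 \<le> 1"
    using bounds(1) by (simp add: phi_def)
  then have "(3/4 * phi x)\<^sup>2 = 9/16 * (1 - x\<^sup>2)"
    by (simp only: power_mult_distrib phi_square) (simp add: power2_eq_square)
  with z2 have "(3/4 * phi x)\<^sup>2 \<le> 1 - z\<^sup>2"
    by simp
  then show "3/4 * phi x \<le> phi z"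
    unfolding phi_def by (rule real_le_rsqrt)
  have "phi z \<le> sqrt (4 * (1 - x\<^sup>2))"
    unfolding phi_def using z2(2) by (rule real_sqrt_le_mono)
  also have "sqrt (4 * (1 - x\<^sup>2)) = 2 * phi x"
    by (simp only: phi_def real_sqrt_mult real_sqrt_four)
  finally show "phi z \<le> 2 * phi x" .
qed

lemma mem_open_interval_near:
  fixes x y s :: real
  assumes "\<bar>y - x\<bar> \<le> s" "s < 1 - \<bar>x\<bar>"
  shows "y \<in> {-1<..<1}"
  using assms by (auto simp: abs_if split: if_split_asm)

lemma phi_le_near_ends:
  assumes "0 \<le> \<delta>" "\<bar>x\<bar> \<le> 1" "1 - 50 * \<delta>\<^sup>2 < \<bar>x\<bar>"
  shows "phi x \<le> 10 * \<delta>"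
proof -
  have "1 - x\<^sup>2 = (1 - \<bar>x\<bar>) * (1 + \<bar>x\<bar>)"
    by (rule one_minus_square_eq_abs)
  also have "\<dots> \<le> (50 * \<delta>\<^sup>2) * 2"
    using assms by (intro mult_mono) auto
  also have "\<dots> = (10 * \<delta>)\<^sup>2"
    by (simp add: power_mult_distrib)
  finally show ?thesis
    unfolding phi_def using assms(1) real_le_lsqrt by simp
qed

lemma powr_le_comparable:
  fixes p p' a :: real
  assumes p: "0 < p" "p / 2 \<le> p'" "p' \<le> 2 * p"
  shows "p powr a \<le> 2 powr \<bar>a\<bar> * p' powr a"
proof -
  have p': "0 < p'" using p by linarith
  have "(p / p') powr a \<le> 2 powr \<bar>a\<bar>"
  proof (cases "0 \<le> a")
    case True
    have "(p / p') powr a \<le> 2 powr a"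
      using True p p' by (intro powr_mono2) (auto simp: divide_le_eq)
    then show ?thesis using True by simp
  next
    case False
    have "(p / p') powr a = (p' / p) powr (- a)"
      using p p' by (simp add: powr_minus_divide powr_divide)
    also have "\<dots> \<le> 2 powr (- a)"
      using False p p' by (intro powr_mono2) (auto simp: divide_le_eq)
    finally show ?thesis using False by simp
  qed
  then have "(p / p') powr a * p' powr a \<le> 2 powr \<bar>a\<bar> * p' powr a"
    by (intro mult_right_mono) auto
  then show ?thesis using p p' by (simp add: powr_divide)
qed

lemma powr_mult_split:
  fixes p g q b :: real
  assumes p: "0 < p" and g: "0 \<le> g" and q: "1 < q"
  shows "(p powr b * g) powr q
       = (p powr (b - 1 + 1/q) * g) * (p powr (b - 1 + 1/q) * g * p) powr (q - 1)"
proof (cases "g = 0")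
  case False
  define v where "v = p powr (b - 1 + 1/q) * g"
  have v: "0 < v" using p g False by (simp add: v_def)
  have "p powr b = p powr (b - 1 + 1/q) * p powr (1 - 1/q)"
    using p by (simp flip: powr_add)
  then have "(p powr b * g) powr q = v powr q * (p powr (1 - 1/q)) powr q"
    using v p by (simp add: v_def powr_mult algebra_simps)
  also have "(p powr (1 - 1/q)) powr q = p powr (q - 1)"
    using p q by (simp add: powr_powr algebra_simps)
  also have "v powr q = v * v powr (q - 1)"
    using v powr_add[of v 1 "q - 1"] by simp
  also have "v * v powr (q - 1) * p powr (q - 1) = v * (v * p) powr (q - 1)"
    using v p by (simp add: powr_mult)
  finally show ?thesis by (simp add: v_def)
qed simp

lemma powr_interpolation:
  fixes B d r q :: real
  assumes B: "0 < B" and d: "0 < d" and r: "0 \<le> r" and q: "1 < q"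
  shows "((B * r / d) powr (q - 1) * r) powr (1/q) = B powr (1 - 1/q) * d powr (1/q - 1) * r"
proof (cases "r = 0")
  case False
  then have r: "0 < r" using r by simp
  have "((B * r / d) powr (q - 1) * r) powr (1/q) = ((B * r / d) powr (q - 1)) powr (1/q) * r powr (1/q)"
    using B d r by (simp add: powr_mult)
  also have "((B * r / d) powr (q - 1)) powr (1/q) = (B * r / d) powr (1 - 1/q)"
    using q by (simp add: powr_powr diff_divide_distrib)
  also have "(B * r / d) powr (1 - 1/q) = B powr (1 - 1/q) * r powr (1 - 1/q) / d powr (1 - 1/q)"
    using B d r by (simp add: powr_mult powr_divide)
  also have "B powr (1 - 1/q) * r powr (1 - 1/q) / d powr (1 - 1/q) * r powr (1/q)
      = B powr (1 - 1/q) * (r powr (1 - 1/q) * r powr (1/q)) / d powr (1 - 1/q)" by simp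
  also have "r powr (1 - 1/q) * r powr (1/q) = r" using r by (simp flip: powr_add)
  also have "B powr (1 - 1/q) * r / d powr (1 - 1/q) = B powr (1 - 1/q) * d powr (1/q - 1) * r"
  proof -
    have e: "1/q - 1 = - (1 - 1/q)" by simp
    have "d powr (1/q - 1) = 1 / d powr (1 - 1/q)" unfolding e by (rule powr_minus_divide)
    then show ?thesis by simp
  qed
  finally show ?thesis .
qed simp

lemma phi_continuous: "continuous_on UNIV phi"
  unfolding phi_def[abs_def] by (intro continuous_intros)

lemma phi_measurable [measurable]: "phi \<in> borel_measurable borel"
  by (rule borel_measurable_continuous_onI[OF phi_continuous])

lemma Delta2_phi_measurable:
  fixes f :: "real \<Rightarrow> real"
  assumes f: "continuous_on {-1..1} f"
  shows "(\<lambda>z. Delta2 (c * phi z) f z) \<in> borel_measurable borel"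
proof -
  \<comment> \<open>Clamping to [-1,1] extends f continuously to all of \<real> without changing Delta2.\<close>
  define clamp where "clamp = (\<lambda>y::real. max (-1) (min 1 y))"
  define g where "g = (\<lambda>y. f (clamp y))"
  have "continuous_on UNIV clamp" "clamp ` UNIV \<subseteq> {-1..1}"
    unfolding clamp_def by (auto intro!: continuous_intros)
  then have "continuous_on UNIV g"
    unfolding g_def by (rule continuous_on_compose2[OF f])
  then have [measurable]: "g \<in> borel_measurable borel"
    by (rule borel_measurable_continuous_onI)
  have "Delta2 (c * phi z) f z = (if -1 \<le> z - c * phi z \<and> z - c * phi z \<le> 1 \<and> -1 \<le> z + c * phi z \<and> z + c * phi z \<le> 1
       then g (z - c * phi z) - 2 * g z + g (z + c * phi z) else 0)" for z
  proof (cases "-1 \<le> z - c * phi z \<and> z - c * phi z \<le> 1 \<and> -1 \<le> z + c * phi z \<and> z + c * phi z \<le> 1")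
    case True
    then have "z \<in> {-1..1}" by auto
    with True show ?thesis by (simp add: Delta2_def g_def clamp_def)
  qed (auto simp: Delta2_def)
  then show ?thesis by simp
qed

lemma ennreal_weighted_sum:
  fixes a b c :: real
  assumes "0 \<le> a" "0 \<le> b" "0 \<le> c"
  shows "ennreal (a + 2 * b + c) = ennreal a + 2 * ennreal b + ennreal c"
proof -
  have "ennreal (a + 2 * b + c) = ennreal a + ennreal (2 * b) + ennreal c"
    using assms by (simp add: ennreal_plus)
  also have "ennreal (2 * b) = 2 * ennreal b"
    using assms by (simp add: ennreal_mult)
  finally show ?thesis .
qed

lemma nn_integral_affine:
  fixes g :: "real \<Rightarrow> ennreal"
  assumes [measurable]: "g \<in> borel_measurable borel" and e: "0 < e"
  shows "(\<integral>\<^sup>+t. g (c + e * t) \<partial>lborel) = ennreal (1 / e) * (\<integral>\<^sup>+t. g t \<partial>lborel)"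
proof -
  have "ennreal (1 / e) * (\<integral>\<^sup>+t. g t \<partial>lborel) = (ennreal (1 / e) * ennreal e) * (\<integral>\<^sup>+t. g (c + e * t) \<partial>lborel)"
    using nn_integral_real_affine[of g e c] e by (simp add: mult.assoc)
  also have "ennreal (1 / e) * ennreal e = 1"
    using e by (simp flip: ennreal_mult)
  finally show ?thesis by simp
qed

text \<open>With weights 1, 2, 1 the three samples integrate over t to 2r + 2r + 2r/3 \<le> 5r; dividing
  by the length s/2 of the t-interval gives the factor 10.\<close>
lemma average_le_three_affine:
  fixes g :: "real \<Rightarrow> ennreal"
  assumes [measurable]: "g \<in> borel_measurable borel"
    and g: "(\<integral>\<^sup>+t. g t \<partial>lborel) = ennreal r" "0 \<le> r"
    and s: "0 < s" and v: "0 \<le> v" and K: "0 \<le> K"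
    and bound: "\<And>t. t \<in> {0..s/2} \<Longrightarrow>
      ennreal v \<le> ennreal K * (g (xl + 1/2 * t) + 2 * g (xm + t) + g (xr + 3/2 * t))"
  shows "s * v \<le> 10 * K * r"
proof -
  have affine: "(\<integral>\<^sup>+t. g (c + e * t) \<partial>lborel) = ennreal (r / e)" if "0 < e" for c e
    using nn_integral_affine[of g e c] that g by (simp flip: ennreal_mult)
  have "ennreal v * ennreal (s/2) = (\<integral>\<^sup>+t. ennreal v * indicator {0..s/2} t \<partial>lborel)"
    using s by (simp add: nn_integral_cmult_indicator)
  also have "\<dots> \<le> (\<integral>\<^sup>+t. ennreal K * (g (xl + 1/2 * t) + 2 * g (xm + t) + g (xr + 3/2 * t)) \<partial>lborel)"
    using bound by (intro nn_integral_mono) (simp split: split_indicator)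
  also have "\<dots> = ennreal K * ((\<integral>\<^sup>+t. g (xl + 1/2 * t) \<partial>lborel) + 2 * (\<integral>\<^sup>+t. g (xm + t) \<partial>lborel)
      + (\<integral>\<^sup>+t. g (xr + 3/2 * t) \<partial>lborel))"
    by (simp add: nn_integral_cmult nn_integral_add)
  also have "\<dots> = ennreal K * (ennreal (2 * r) + 2 * ennreal r + ennreal (2/3 * r))"
    using affine[of "1/2" xl] affine[of 1 xm] affine[of "3/2" xr] by (simp add: ac_simps)
  also have "ennreal (2 * r) + 2 * ennreal r + ennreal (2/3 * r) = ennreal (14/3 * r)"
    using ennreal_weighted_sum[of "2 * r" r "2/3 * r"] g by simp
  also have "ennreal K * ennreal (14/3 * r) = ennreal (K * (14/3 * r))"
    by (rule ennreal_mult[symmetric]) (use g K in auto)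
  finally have "ennreal (v * (s/2)) \<le> ennreal (K * (14/3 * r))"
    using v s by (simp only: ennreal_mult[OF v, of "s/2", symmetric])
  then have "v * (s/2) \<le> K * (14/3 * r)"
    using g K by (subst (asm) ennreal_le_iff) auto
  moreover have "s * v = 2 * (v * (s/2))" "K * (14/3 * r) = 14/3 * (K * r)" "0 \<le> K * r"
    using g K by simp_all
  ultimately show ?thesis
    by linarith
qed

lemma Lq_norm_1: "Lq_norm 1 S g = (\<integral>\<^sup>+x\<in>S. ennreal \<bar>g x\<bar> \<partial>lborel)"
  by (auto simp: Lq_norm_def Let_def less_top)

lemma Lq_norm_le:
  assumes "(\<integral>\<^sup>+x\<in>S. ennreal (\<bar>g x\<bar> powr q) \<partial>lborel) \<le> ennreal m" "0 \<le> m" "0 < q"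
  shows "Lq_norm q S g \<le> ennreal (m powr (1 / q))"
proof -
  define I where "I = (\<integral>\<^sup>+x\<in>S. ennreal (\<bar>g x\<bar> powr q) \<partial>lborel)"
  have "I \<noteq> \<infinity>" "enn2real I \<le> m"
    using assms enn2real_mono[of I "ennreal m"] by (auto simp: I_def top_unique)
  then show ?thesis
    using assms by (auto simp: Lq_norm_def Let_def I_def[symmetric] intro!: ennreal_leI powr_mono2)
qed

locale convex_affine_near_ends =
  fixes f :: "real \<Rightarrow> real" and \<delta> :: real
  assumes delta_pos: "0 < \<delta>"
    and convex: "convex_on {-1<..<1} f"
    and affine_left: "\<exists>a b. \<forall>x \<in> {-1 .. -1 + 100 * \<delta>\<^sup>2}. f x = a * x + b"
    and affine_right: "\<exists>a b. \<forall>x \<in> {1 - 100 * \<delta>\<^sup>2 .. 1}. f x = a * x + b"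
begin

abbreviation middle :: "real set" where
  "middle \<equiv> {-1 + 50 * \<delta>\<^sup>2 .. 1 - 50 * \<delta>\<^sup>2}"

definition D :: "real \<Rightarrow> real" where
  "D x = Delta2 (\<delta> * phi x) f x"

lemma middle_subset_open: "middle \<subseteq> {-1<..<1}"
proof
  fix x assume "x \<in> middle"
  then have "-1 + 50 * \<delta>\<^sup>2 \<le> x" "x \<le> 1 - 50 * \<delta>\<^sup>2" by auto
  moreover have "0 < \<delta>\<^sup>2" using delta_pos by simp
  ultimately have "-1 < x" "x < 1" by linarith+
  then show "x \<in> {-1<..<1}" by simp
qed

lemma middle_subset_strip: "middle \<subseteq> {-1 + 8 * \<delta>\<^sup>2 .. 1 - 8 * \<delta>\<^sup>2}"
proof
  fix x assume "x \<in> middle"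
  then have "-1 + 50 * \<delta>\<^sup>2 \<le> x" "x \<le> 1 - 50 * \<delta>\<^sup>2" by auto
  then have "-1 + 8 * \<delta>\<^sup>2 \<le> x" "x \<le> 1 - 8 * \<delta>\<^sup>2"
    using zero_le_power2[of \<delta>] by linarith+
  then show "x \<in> {-1 + 8 * \<delta>\<^sup>2 .. 1 - 8 * \<delta>\<^sup>2}" by simp
qed

lemma continuous_on_f: "continuous_on {-1..1} f"
proof -
  obtain a b where ab: "\<forall>x \<in> {-1 .. -1 + 100 * \<delta>\<^sup>2}. f x = a * x + b"
    using affine_left by blast
  obtain a' b' where ab': "\<forall>x \<in> {1 - 100 * \<delta>\<^sup>2 .. 1}. f x = a' * x + b'"
    using affine_right by blast
  have "continuous_on {-1 .. -1 + 100 * \<delta>\<^sup>2} f"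
    by (rule continuous_on_eq[of _ "\<lambda>x. a * x + b"]) (auto intro: continuous_intros simp: ab)
  moreover have "continuous_on {1 - 100 * \<delta>\<^sup>2 .. 1} f"
    by (rule continuous_on_eq[of _ "\<lambda>x. a' * x + b'"]) (auto intro: continuous_intros simp: ab')
  moreover have "continuous_on middle f"
    using middle_subset_open by (intro continuous_on_subset[OF convex_on_continuous[OF _ convex]]) auto
  ultimately have "continuous_on ({-1 .. -1 + 100 * \<delta>\<^sup>2} \<union> middle \<union> {1 - 100 * \<delta>\<^sup>2 .. 1}) f"
    by (metis closed_Un closed_atLeastAtMost continuous_on_closed_Un)
  moreover have "{-1..1} \<subseteq> {-1 .. -1 + 100 * \<delta>\<^sup>2} \<union> middle \<union> {1 - 100 * \<delta>\<^sup>2 .. 1}"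
  proof
    fix x :: real assume "x \<in> {-1..1}"
    moreover have "0 \<le> \<delta>\<^sup>2" by simp
    ultimately show "x \<in> {-1 .. -1 + 100 * \<delta>\<^sup>2} \<union> middle \<union> {1 - 100 * \<delta>\<^sup>2 .. 1}"
      unfolding Un_iff atLeastAtMost_iff by linarith
  qed
  ultimately show ?thesis
    by (rule continuous_on_subset)
qed

lemma D_measurable [measurable]: "D \<in> borel_measurable borel"
  unfolding D_def[abs_def] by (rule Delta2_phi_measurable[OF continuous_on_f])

lemma Delta2_zero_near_ends:
  assumes x: "x \<in> {-1..1}" "x \<notin> middle" and h: "0 \<le> h" "h \<le> \<delta>"
  shows "Delta2 (h * phi x) f x = 0"
proof (cases "-1 \<le> x - h * phi x \<and> x + h * phi x \<le> 1")
  case True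
  define r where "r = h * phi x"
  have "phi x \<le> 10 * \<delta>"
    using x delta_pos by (intro phi_le_near_ends) (auto simp: abs_if)
  then have r: "0 \<le> r" "r \<le> 10 * \<delta>\<^sup>2"
    using h x phi_nonneg[of x] mult_mono[of h \<delta> "phi x" "10 * \<delta>"]
    by (auto simp: r_def power2_eq_square)
  have affine_near: "\<exists>a b. \<forall>y \<in> {x - r .. x + r}. f y = a * y + b"
  proof (cases "x < -1 + 50 * \<delta>\<^sup>2")
    case True
    with r \<open>-1 \<le> x - h * phi x \<and> _\<close> have "{x - r .. x + r} \<subseteq> {-1 .. -1 + 100 * \<delta>\<^sup>2}"
      by (auto simp: r_def)
    with affine_left show ?thesis by blast
  next
    case False
    with x r \<open>_ \<and> x + h * phi x \<le> 1\<close> have "{x - r .. x + r} \<subseteq> {1 - 100 * \<delta>\<^sup>2 .. 1}"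
      by (auto simp: r_def)
    with affine_right show ?thesis by blast
  qed
  then obtain a b where "\<forall>y \<in> {x - r .. x + r}. f y = a * y + b"
    by blast
  with r True show ?thesis
    by (simp add: Delta2_eq_second_diff second_diff_def r_def algebra_simps)
qed (auto simp: Delta2_def)

lemma Delta2_le_D:
  assumes x: "x \<in> middle" and h: "0 \<le> h" "h \<le> \<delta>"
  shows "0 \<le> Delta2 (h * phi x) f x" "Delta2 (h * phi x) f x \<le> D x"
proof -
  define s where "s = \<delta> * phi x"
  define r where "r = h * phi x"
  have p: "0 < phi x" "0 < s" "5 * s \<le> 1 - \<bar>x\<bar>"
    using phi_middle_bounds[OF delta_pos x] delta_pos by (simp_all add: s_def)
  then have s: "0 < s" "s < 1 - \<bar>x\<bar>"
    by linarith+
  have r: "0 \<le> r" "r \<le> s"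
    using h p(1) by (auto simp: s_def r_def intro: mult_right_mono)
  have ends: "x - s \<in> {-1<..<1}" "x + s \<in> {-1<..<1}" "x - r \<in> {-1<..<1}" "x + r \<in> {-1<..<1}"
    using s r by (auto intro!: mem_open_interval_near[of _ x s])
  have eqs: "Delta2 r f x = second_diff f x r" "D x = second_diff f x s"
    using ends r s unfolding D_def s_def[symmetric] by (auto intro!: Delta2_eq_second_diff)
  show "0 \<le> Delta2 (h * phi x) f x"
    using second_diff_nonneg[OF convex ends(3,4) r(1)] eqs by (simp add: r_def)
  show "Delta2 (h * phi x) f x \<le> D x"
    using second_diff_mono[OF convex ends(1,2) r] eqs by (simp add: r_def)
qed

lemma second_diff_le_D_near:
  assumes x: "x \<in> middle" and z: "\<bar>z - x\<bar> \<le> 5/4 * (\<delta> * phi x)"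
    and \<sigma>: "0 \<le> \<sigma>" "\<sigma> \<le> 3/4 * (\<delta> * phi x)"
  shows "second_diff f z \<sigma> \<le> D z"
proof -
  define s where "s = \<delta> * phi x"
  define s' where "s' = \<delta> * phi z"
  have s: "0 < s" "5 * s \<le> 1 - \<bar>x\<bar>"
    using phi_middle_bounds[OF delta_pos x] delta_pos by (simp_all add: s_def)
  have "\<delta> * (3/4 * phi x) \<le> \<delta> * phi z" "\<delta> * phi z \<le> \<delta> * (2 * phi x)"
    using phi_comparable_near[OF delta_pos x z] delta_pos by (intro mult_left_mono; simp)+
  then have s': "3/4 * s \<le> s'" "s' \<le> 2 * s"
    by (simp_all add: s_def s'_def)
  have zx: "z - x \<le> 5/4 * s" "x - z \<le> 5/4 * s"
    using z[unfolded abs_le_iff] unfolding s_def by auto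
  have "\<bar>z - s' - x\<bar> \<le> 13/4 * s" "\<bar>z + s' - x\<bar> \<le> 13/4 * s"
    unfolding abs_le_iff using zx s s' \<sigma> by (intro conjI; linarith)+
  moreover have "13/4 * s < 1 - \<bar>x\<bar>"
    using s by linarith
  ultimately have ends: "z - s' \<in> {-1<..<1}" "z + s' \<in> {-1<..<1}"
    by (blast intro: mem_open_interval_near)+
  have "D z = second_diff f z s'"
    unfolding D_def s'_def[symmetric] using ends s s' by (intro Delta2_eq_second_diff) auto
  then show ?thesis
    using second_diff_mono[OF convex ends \<sigma>(1)] \<sigma>(2) s' by (simp add: s_def)
qed

lemma D_nonneg_near:
  assumes "x \<in> middle" "\<bar>z - x\<bar> \<le> 5/4 * (\<delta> * phi x)"
  shows "0 \<le> D z"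
  using second_diff_le_D_near[OF assms, of 0] phi_middle_bounds[OF delta_pos assms(1)] delta_pos
  by (simp add: second_diff_def)

text \<open>Shift the midpoint by t, then split the step s + t into two halves (s + t)/2 \<le> 3s/4, where
  s = \<delta>\<phi>(x); the three new base points stay within 5s/4 of x.\<close>
lemma D_le_three_near:
  assumes x: "x \<in> middle" and t: "0 \<le> t" "t \<le> \<delta> * phi x / 2"
  shows "D x \<le> D (x - \<delta> * phi x / 2 + t / 2) + 2 * D (x + t) + D (x + \<delta> * phi x / 2 + 3/2 * t)"
proof -
  define s where "s = \<delta> * phi x"
  define \<sigma> where "\<sigma> = (s + t) / 2"
  have s: "0 < s" "5 * s \<le> 1 - \<bar>x\<bar>"
    using phi_middle_bounds[OF delta_pos x] delta_pos by (simp_all add: s_def)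
  have ts: "2 * t \<le> s" "t < s"
    using t s by (simp_all add: s_def)
  have "\<bar>(x - s) - x\<bar> \<le> s" "\<bar>(x + s + 2 * t) - x\<bar> \<le> 2 * s"
    unfolding abs_le_iff using s t ts by (intro conjI; linarith)+
  moreover have "s < 1 - \<bar>x\<bar>" "2 * s < 1 - \<bar>x\<bar>"
    using s by linarith+
  ultimately have ends: "x - s \<in> {-1<..<1}" "x + s + 2 * t \<in> {-1<..<1}"
    by (blast intro: mem_open_interval_near)+
  have \<sigma>: "0 \<le> \<sigma>" "\<sigma> \<le> 3/4 * s"
    unfolding \<sigma>_def using s t ts by (auto simp: field_simps)
  have near: "second_diff f z \<sigma> \<le> D z" if "\<bar>z - x\<bar> \<le> 5/4 * s" for z
    using second_diff_le_D_near[OF x, of z \<sigma>] that \<sigma> by (simp add: s_def)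
  have dist: "\<bar>x + t - \<sigma> - x\<bar> \<le> 5/4 * s" "\<bar>x + t - x\<bar> \<le> 5/4 * s" "\<bar>x + t + \<sigma> - x\<bar> \<le> 5/4 * s"
    unfolding \<sigma>_def abs_le_iff using s t ts by (auto simp: field_simps)
  have "D x = second_diff f x s"
    unfolding D_def s_def[symmetric] using ends s t by (intro Delta2_eq_second_diff) auto
  also have "\<dots> \<le> second_diff f (x + t) (s + t)"
    using second_diff_le_shifted[OF convex ends t(1) ts(2)] .
  also have "s + t = 2 * \<sigma>"
    by (simp add: \<sigma>_def)
  also have "second_diff f (x + t) (2 * \<sigma>)
      = second_diff f (x + t - \<sigma>) \<sigma> + 2 * second_diff f (x + t) \<sigma> + second_diff f (x + t + \<sigma>) \<sigma>"
    by (rule second_diff_double)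
  also have "\<dots> \<le> D (x + t - \<sigma>) + 2 * D (x + t) + D (x + t + \<sigma>)"
    using near[OF dist(1)] near[OF dist(2)] near[OF dist(3)] by linarith
  finally have "D x \<le> D (x + t - \<sigma>) + 2 * D (x + t) + D (x + t + \<sigma>)" .
  moreover have "x + t - \<sigma> = x - \<delta> * phi x / 2 + t / 2" "x + t + \<sigma> = x + \<delta> * phi x / 2 + 3/2 * t"
    by (simp_all add: \<sigma>_def s_def field_simps)
  ultimately show ?thesis
    by (simp only:)
qed

definition weighted_D :: "real \<Rightarrow> real \<Rightarrow> ennreal" where
  "weighted_D a z = ennreal \<bar>phi z powr a * D z\<bar> * indicator {-1 + 8 * \<delta>\<^sup>2 .. 1 - 8 * \<delta>\<^sup>2} z"

lemma weighted_D_measurable [measurable]: "weighted_D a \<in> borel_measurable borel"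
  unfolding weighted_D_def[abs_def] by measurable

lemma nn_integral_weighted_D:
  "(\<integral>\<^sup>+z. weighted_D a z \<partial>lborel) = Lq_norm 1 {-1 + 8 * \<delta>\<^sup>2 .. 1 - 8 * \<delta>\<^sup>2} (\<lambda>z. phi z powr a * D z)"
  by (simp add: Lq_norm_1 weighted_D_def)

lemma D_le_weighted_D_near:
  assumes x: "x \<in> middle" and z: "\<bar>z - x\<bar> \<le> 5/4 * (\<delta> * phi x)"
  shows "ennreal (phi x powr a * D z) \<le> ennreal (2 powr \<bar>a\<bar>) * weighted_D a z"
proof -
  have "phi x powr a \<le> 2 powr \<bar>a\<bar> * phi z powr a"
    using phi_middle_bounds(1)[OF delta_pos x] phi_comparable_near[OF delta_pos x z] by (intro powr_le_comparable) auto
  then have "phi x powr a * D z \<le> 2 powr \<bar>a\<bar> * phi z powr a * D z"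
    using D_nonneg_near[OF x z] by (rule mult_right_mono)
  then have "ennreal (phi x powr a * D z) \<le> ennreal (2 powr \<bar>a\<bar> * \<bar>phi z powr a * D z\<bar>)"
    using D_nonneg_near[OF x z] by (intro ennreal_leI) (simp add: abs_mult mult.assoc)
  then show ?thesis
    using phi_comparable_near(3)[OF delta_pos x z] by (simp add: weighted_D_def ennreal_mult)
qed

lemma D_le_weighted_D_three_near:
  assumes x: "x \<in> middle" and t: "0 \<le> t" "t \<le> \<delta> * phi x / 2"
  shows "ennreal (phi x powr a * D x) \<le> ennreal (2 powr \<bar>a\<bar>) * (weighted_D a (x - \<delta> * phi x / 2 + 1/2 * t)
    + 2 * weighted_D a (x + t) + weighted_D a (x + \<delta> * phi x / 2 + 3/2 * t))"
proof -
  define s where "s = \<delta> * phi x"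
  define z1 z2 z3 where "z1 = x - s/2 + 1/2 * t" and "z2 = x + t" and "z3 = x + s/2 + 3/2 * t"
  have s: "0 < s" and w: "0 < phi x powr a"
    using phi_middle_bounds(1)[OF delta_pos x] delta_pos by (auto simp: s_def)
  have "\<bar>z1 - x\<bar> \<le> 5/4 * s" "\<bar>z2 - x\<bar> \<le> 5/4 * s" "\<bar>z3 - x\<bar> \<le> 5/4 * s"
    using t s by (auto simp: z1_def z2_def z3_def s_def)
  then have z: "\<bar>z1 - x\<bar> \<le> 5/4 * (\<delta> * phi x)" "\<bar>z2 - x\<bar> \<le> 5/4 * (\<delta> * phi x)" "\<bar>z3 - x\<bar> \<le> 5/4 * (\<delta> * phi x)"
    by (simp_all add: s_def)
  have "D x \<le> D z1 + 2 * D z2 + D z3"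
    using D_le_three_near[OF x t] by (simp add: z1_def z2_def z3_def s_def)
  then have "phi x powr a * D x \<le> phi x powr a * D z1 + 2 * (phi x powr a * D z2) + phi x powr a * D z3"
    using w mult_left_mono[of "D x" "D z1 + 2 * D z2 + D z3" "phi x powr a"] by (simp add: algebra_simps)
  then have "ennreal (phi x powr a * D x)
      \<le> ennreal (phi x powr a * D z1 + 2 * (phi x powr a * D z2) + phi x powr a * D z3)"
    by (rule ennreal_leI)
  also have "\<dots> = ennreal (phi x powr a * D z1) + 2 * ennreal (phi x powr a * D z2) + ennreal (phi x powr a * D z3)"
    using D_nonneg_near[OF x z(1)] D_nonneg_near[OF x z(2)] D_nonneg_near[OF x z(3)] w
    by (intro ennreal_weighted_sum) simp_all
  also have "\<dots> \<le> ennreal (2 powr \<bar>a\<bar>) * weighted_D a z1 + 2 * (ennreal (2 powr \<bar>a\<bar>) * weighted_D a z2)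
      + ennreal (2 powr \<bar>a\<bar>) * weighted_D a z3"
    using D_le_weighted_D_near[OF x z(1)] D_le_weighted_D_near[OF x z(2)] D_le_weighted_D_near[OF x z(3)]
    by (intro add_mono mult_left_mono) auto
  also have "\<dots> = ennreal (2 powr \<bar>a\<bar>) * (weighted_D a z1 + 2 * weighted_D a z2 + weighted_D a z3)"
    by (simp add: algebra_simps)
  finally show ?thesis
    by (simp add: z1_def z2_def z3_def s_def)
qed

lemma D_pointwise_le_L1:
  assumes x: "x \<in> middle" and r: "(\<integral>\<^sup>+z. weighted_D a z \<partial>lborel) = ennreal r" "0 \<le> r"
  shows "\<delta> * phi x * (phi x powr a * D x) \<le> 10 * 2 powr \<bar>a\<bar> * r"
proof -
  have "0 < \<delta> * phi x" "0 \<le> phi x powr a * D x"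
    using phi_middle_bounds(1)[OF delta_pos x] D_nonneg_near[OF x, of x] delta_pos by auto
  then show ?thesis
    using D_le_weighted_D_three_near[OF x] r
    by (intro average_le_three_affine[where g = "weighted_D a" and xl = "x - \<delta> * phi x / 2"
          and xm = x and xr = "x + \<delta> * phi x / 2"]) auto
qed

lemma Delta2_powr_le:
  assumes q: "1 < q" and h: "0 \<le> h" "h \<le> \<delta>" and x: "x \<in> middle"
    and bound: "\<delta> * phi x * (phi x powr (2 * \<beta> - 1 + 1 / q) * D x) \<le> B"
  shows "\<bar>phi x powr (2 * \<beta>) * Delta2 (h * phi x) f x\<bar> powr q
    \<le> (B / \<delta>) powr (q - 1) * \<bar>phi x powr (2 * \<beta> - 1 + 1 / q) * D x\<bar>"
proof -
  define w where "w = phi x powr (2 * \<beta> - 1 + 1 / q) * D x"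
  have p: "0 < phi x"
    using phi_middle_bounds(1)[OF delta_pos x] .
  have \<Delta>: "0 \<le> Delta2 (h * phi x) f x" "Delta2 (h * phi x) f x \<le> D x"
    using Delta2_le_D[OF x h] by auto
  then have w: "0 \<le> w"
    using p by (simp add: w_def)
  have "\<bar>phi x powr (2 * \<beta>) * Delta2 (h * phi x) f x\<bar> powr q \<le> (phi x powr (2 * \<beta>) * D x) powr q"
    using p q \<Delta> by (auto intro!: powr_mono2 mult_left_mono)
  also have "\<dots> = w * (w * phi x) powr (q - 1)"
    unfolding w_def using p \<Delta> q by (intro powr_mult_split) auto
  also have "\<dots> \<le> w * (B / \<delta>) powr (q - 1)"
  proof -
    have "w * phi x \<le> B / \<delta>"
      using bound delta_pos by (simp add: w_def field_simps)
    then show ?thesis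
      using w p q by (intro mult_left_mono powr_mono2) auto
  qed
  finally show ?thesis
    using w by (simp add: w_def mult.commute)
qed

lemma Delta2_powr_indicator_le:
  assumes q: "1 < q" and h: "0 < h" "h \<le> \<delta>"
    and r: "(\<integral>\<^sup>+z. weighted_D (2 * \<beta> - 1 + 1 / q) z \<partial>lborel) = ennreal r" "0 \<le> r"
  shows "ennreal (\<bar>phi x powr (2 * \<beta>) * Delta2 (h * phi x) f x\<bar> powr q) * indicator {-1 + 8 * h\<^sup>2 .. 1 - 8 * h\<^sup>2} x
    \<le> ennreal ((10 * 2 powr \<bar>2 * \<beta> - 1 + 1 / q\<bar> * r / \<delta>) powr (q - 1)) * weighted_D (2 * \<beta> - 1 + 1 / q) x"
proof (cases "x \<in> middle")
  case True
  define M where "M = (10 * 2 powr \<bar>2 * \<beta> - 1 + 1 / q\<bar> * r / \<delta>) powr (q - 1)"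
  have "\<bar>phi x powr (2 * \<beta>) * Delta2 (h * phi x) f x\<bar> powr q \<le> M * \<bar>phi x powr (2 * \<beta> - 1 + 1 / q) * D x\<bar>"
    using Delta2_powr_le[OF q _ h(2) True D_pointwise_le_L1[OF True r]] h by (simp add: M_def)
  then have "ennreal (\<bar>phi x powr (2 * \<beta>) * Delta2 (h * phi x) f x\<bar> powr q)
      \<le> ennreal (M * \<bar>phi x powr (2 * \<beta> - 1 + 1 / q) * D x\<bar>)"
    by (rule ennreal_leI)
  also have "\<dots> = ennreal M * weighted_D (2 * \<beta> - 1 + 1 / q) x"
  proof -
    have "x \<in> {-1 + 8 * \<delta>\<^sup>2 .. 1 - 8 * \<delta>\<^sup>2}"
      using middle_subset_strip True by blast
    then show ?thesis
      by (simp add: weighted_D_def M_def ennreal_mult)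
  qed
  finally show ?thesis
    unfolding M_def by (rule order_trans[rotated]) (simp add: indicator_def)
next
  case False
  show ?thesis
  proof (cases "x \<in> {-1 + 8 * h\<^sup>2 .. 1 - 8 * h\<^sup>2}")
    case True
    then have "-1 + 8 * h\<^sup>2 \<le> x" "x \<le> 1 - 8 * h\<^sup>2"
      by auto
    then have "-1 \<le> x" "x \<le> 1"
      using zero_le_power2[of h] by linarith+
    then have "Delta2 (h * phi x) f x = 0"
      using Delta2_zero_near_ends[OF _ False] h by simp
    then show ?thesis
      by simp
  qed simp
qed

lemma Lq_norm_Delta2_le:
  assumes q: "1 < q" and h: "0 < h" "h \<le> \<delta>"
  shows "Lq_norm q {-1 + 8 * h\<^sup>2 .. 1 - 8 * h\<^sup>2} (\<lambda>x. phi x powr (2 * \<beta>) * Delta2 (h * phi x) f x)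
    \<le> ennreal ((10 * 2 powr \<bar>2 * \<beta> - 1 + 1 / q\<bar>) powr (1 - 1 / q) * \<delta> powr (1 / q - 1))
      * Lq_norm 1 {-1 + 8 * \<delta>\<^sup>2 .. 1 - 8 * \<delta>\<^sup>2} (\<lambda>x. phi x powr (2 * \<beta> - 1 + 1 / q) * D x)"
    (is "?L \<le> ennreal ?C * ?R")
proof -
  define a where "a = 2 * \<beta> - 1 + 1 / q"
  define B where "B = 10 * 2 powr \<bar>a\<bar>"
  have C: "0 < ?C"
    using delta_pos by simp
  consider "?R = \<infinity>" | r where "?R = ennreal r" "0 \<le> r"
    by (cases ?R) auto
  then show ?thesis
  proof cases
    case 1
    then show ?thesis
      using C delta_pos by (simp add: ennreal_mult_top)
  next
    case (2 r)
    define M where "M = (B * r / \<delta>) powr (q - 1)"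
    have r: "(\<integral>\<^sup>+z. weighted_D (2 * \<beta> - 1 + 1 / q) z \<partial>lborel) = ennreal r"
      using 2 by (simp add: nn_integral_weighted_D)
    have "(\<integral>\<^sup>+x\<in>{-1 + 8 * h\<^sup>2 .. 1 - 8 * h\<^sup>2}. ennreal (\<bar>phi x powr (2 * \<beta>) * Delta2 (h * phi x) f x\<bar> powr q) \<partial>lborel)
        \<le> (\<integral>\<^sup>+x. ennreal M * weighted_D a x \<partial>lborel)"
      using Delta2_powr_indicator_le[OF q h r 2(2)] by (intro nn_integral_mono) (simp add: M_def B_def a_def)
    also have "\<dots> = ennreal M * ennreal r"
      by (simp add: nn_integral_cmult r a_def)
    also have "\<dots> = ennreal (M * r)"
      by (rule ennreal_mult[symmetric]) (use 2 in \<open>auto simp: M_def\<close>)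
    finally have "?L \<le> ennreal ((M * r) powr (1 / q))"
      using q 2 by (intro Lq_norm_le) (auto simp: M_def)
    also have "(M * r) powr (1 / q) = ?C * r"
      using powr_interpolation[of B \<delta> r q] q 2 delta_pos by (simp add: M_def B_def a_def)
    finally show ?thesis
      using 2 C by (simp add: ennreal_mult)
  qed
qed

lemma Omega2_le:
  assumes "1 < q"
  shows "Omega2 f \<delta> (\<lambda>x. phi x powr (2 * \<beta>)) q
    \<le> ennreal ((10 * 2 powr \<bar>2 * \<beta> - 1 + 1 / q\<bar>) powr (1 - 1 / q) * \<delta> powr (1 / q - 1))
      * Omega2 f \<delta> (\<lambda>x. phi x powr (2 * \<beta> - 1 + 1 / q)) 1"
proof -
  let ?C = "(10 * 2 powr \<bar>2 * \<beta> - 1 + 1 / q\<bar>) powr (1 - 1 / q) * \<delta> powr (1 / q - 1)"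
  let ?R = "Lq_norm 1 {-1 + 8 * \<delta>\<^sup>2 .. 1 - 8 * \<delta>\<^sup>2} (\<lambda>x. phi x powr (2 * \<beta> - 1 + 1 / q) * D x)"
  have "Omega2 f \<delta> (\<lambda>x. phi x powr (2 * \<beta>)) q \<le> ennreal ?C * ?R"
    unfolding Omega2_def using assms by (intro SUP_least Lq_norm_Delta2_le) auto
  also have "?R \<le> Omega2 f \<delta> (\<lambda>x. phi x powr (2 * \<beta> - 1 + 1 / q)) 1"
    unfolding Omega2_def D_def using delta_pos by (intro SUP_upper) auto
  then have "ennreal ?C * ?R \<le> ennreal ?C * Omega2 f \<delta> (\<lambda>x. phi x powr (2 * \<beta> - 1 + 1 / q)) 1"
    by (rule mult_left_mono) simp
  finally show ?thesis .
qed

end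

theorem lemma5p2:
  fixes \<beta> q :: real
  assumes "1 < q"
  shows "\<exists>c>0. \<forall>\<delta> (f :: real \<Rightarrow> real).
           0 < \<delta> \<and> \<delta> < 1 / 100
           \<and> convex_on {-1<..<1} f
           \<and> f \<in> W_space q \<beta>
           \<and> (\<exists>a b. \<forall>x \<in> {-1 .. -1 + 100 * \<delta>\<^sup>2}. f x = a * x + b)
           \<and> (\<exists>a b. \<forall>x \<in> {1 - 100 * \<delta>\<^sup>2 .. 1}. f x = a * x + b)
           \<longrightarrow> Omega2 f \<delta> (\<lambda>x. phi x powr (2 * \<beta>)) q
               \<le> ennreal (c * \<delta> powr (1 / q - 1))
                  * Omega2 f \<delta> (\<lambda>x. phi x powr (2 * \<beta> - 1 + 1 / q)) 1"
proof (intro exI[of _ "(10 * 2 powr \<bar>2 * \<beta> - 1 + 1 / q\<bar>) powr (1 - 1 / q)"] conjI allI impI)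
  fix \<delta> and f :: "real \<Rightarrow> real"
  assume "0 < \<delta> \<and> \<delta> < 1 / 100 \<and> convex_on {-1<..<1} f \<and> f \<in> W_space q \<beta>
    \<and> (\<exists>a b. \<forall>x \<in> {-1 .. -1 + 100 * \<delta>\<^sup>2}. f x = a * x + b)
    \<and> (\<exists>a b. \<forall>x \<in> {1 - 100 * \<delta>\<^sup>2 .. 1}. f x = a * x + b)"
  then interpret convex_affine_near_ends f \<delta>
    by unfold_locales auto
  show "Omega2 f \<delta> (\<lambda>x. phi x powr (2 * \<beta>)) q
      \<le> ennreal ((10 * 2 powr \<bar>2 * \<beta> - 1 + 1 / q\<bar>) powr (1 - 1 / q) * \<delta> powr (1 / q - 1))
        * Omega2 f \<delta> (\<lambda>x. phi x powr (2 * \<beta> - 1 + 1 / q)) 1"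
    by (rule Omega2_le[OF assms])
qed simp

end
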